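(* For all natural numbers $n \neq m$, the terms $B\,Y_0\,S^{n}\,I$ and $B\,Y_0\,S^{m}\,I$ are not $\beta$-convertible; that is, the Scott sequence $B Y_0 I,\ B Y_0 S I,\ B Y_0 S S I,\ \ldots$ contains no duplicates.
   Context: Untyped $\lambda$-calculus with $\beta$-conversion. $I = \lambda x.x$, $S = \lambda xyz.\,xz(yz)$, $B = \lambda xyz.\,x(yz)$, and $Y_0 = \lambda f.\,\omega_f\,\omega_f$ with $\omega_f = \lambda x.\,f(xx)$. $A\,C^n$ denotes the left-associated application $A C\cdots C$ with $n$ copies of $C$. *)

theory Defs
  imports Main
begin

datatype lterm = Var nat | App lterm lterm | Abs lterm

primrec lift :: "lterm \<Rightarrow> nat \<Rightarrow> lterm" where
  "lift (Var i) k = (if i < k then Var i else Var (Suc i))"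
| "lift (App s t) k = App (lift s k) (lift t k)"
| "lift (Abs s) k = Abs (lift s (Suc k))"

primrec subst :: "lterm \<Rightarrow> lterm \<Rightarrow> nat \<Rightarrow> lterm" where
  "subst (Var i) s k = (if k < i then Var (i - 1) else if i = k then s else Var i)"
| "subst (App t u) s k = App (subst t s k) (subst u s k)"
| "subst (Abs t) s k = Abs (subst t (lift s 0) (Suc k))"

inductive beta :: "lterm \<Rightarrow> lterm \<Rightarrow> bool" where
  beta_redex: "beta (App (Abs s) t) (subst s t 0)"
| appL: "beta s t \<Longrightarrow> beta (App s u) (App t u)"
| appR: "beta s t \<Longrightarrow> beta (App u s) (App u t)"
| abs: "beta s t \<Longrightarrow> beta (Abs s) (Abs t)"

definition beta_conv :: "lterm \<Rightarrow> lterm \<Rightarrow> bool" where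
  "beta_conv = equivclp beta"

text \<open>Left-associated iterated application A C^n = A C ... C (n copies).\<close>
primrec app_pow :: "lterm \<Rightarrow> lterm \<Rightarrow> nat \<Rightarrow> lterm" where
  "app_pow A C 0 = A"
| "app_pow A C (Suc n) = App (app_pow A C n) C"

definition combI :: lterm where "combI = Abs (Var 0)"

text \<open>S = \<lambda>x y z. x z (y z)\<close>
definition combS :: lterm where
  "combS = Abs (Abs (Abs (App (App (Var 2) (Var 0)) (App (Var 1) (Var 0)))))"

text \<open>B = \<lambda>x y z. x (y z)\<close>
definition combB :: lterm where
  "combB = Abs (Abs (Abs (App (Var 2) (App (Var 1) (Var 0)))))"

text \<open>Y0 = \<lambda>f. w w with w = \<lambda>x. f (x x)\<close>
definition combY0 :: lterm where
  "combY0 = Abs (App (Abs (App (Var 1) (App (Var 0) (Var 0))))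
                     (Abs (App (Var 1) (App (Var 0) (Var 0)))))"

end

theory Submission
  imports Defs "HOL-Library.Confluence"
begin

text \<open>
  Were the two terms convertible, by Church--Rosser they would have a common reduct R.
  Types are assigned relative to an arrow structure, telling which types are arrows and of
  what; subject reduction holds for every such structure. Over the structure in which a
  recursive type \<open>Rec\<close> unfolds to \<open>Rec \<rightarrow> s\<close>, the term \<open>B Y\<^sub>0 S\<^sup>n I\<close>
  has the type \<open>Y\<^sub>1\<close> for the choice \<open>s = Y\<^sub>n\<close>, where the \<open>Y\<^sub>k\<close> are pairwise
  distinct simple types. Hence R has type \<open>(Y\<^sub>1, Y\<^sub>1)\<close> in the product of the
  structures for \<open>n\<close> and \<open>m\<close>. A Boolean valuation with \<open>v c \<longleftrightarrow> (v a \<longrightarrow> v b)\<close> for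
  every arrow \<open>c = a \<rightarrow> b\<close> validates every typing from a valid context. On the product
  there is one refuting \<open>(Y\<^sub>1, Y\<^sub>1)\<close> and validating the context \<open>(Rec, Rec)\<close>: the arrow
  \<open>(Rec, Rec) \<rightarrow> (Y\<^sub>n, Y\<^sub>m)\<close> then demands that \<open>(Y\<^sub>n, Y\<^sub>m)\<close> be valid, which
  \<open>n \<noteq> m\<close> makes possible.
\<close>

section \<open>Church--Rosser\<close>

lemma lift_lift:
  "i < k + 1 \<Longrightarrow> lift (lift t i) (Suc k) = lift (lift t k) i"
  by (induct t arbitrary: i k) auto

lemma lift_subst [simp]:
  "j < i + 1 \<Longrightarrow> lift (subst t s j) i = subst (lift t (i + 1)) (lift s i) j"
  by (induct t arbitrary: i j s) (simp_all add: diff_Suc lift_lift split: nat.split)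

lemma lift_subst_lt:
  "i < j + 1 \<Longrightarrow> lift (subst t s j) i = subst (lift t i) (lift s i) (j + 1)"
  by (induct t arbitrary: i j s) (auto simp add: lift_lift)

lemma subst_lift [simp]: "subst (lift t k) s k = t"
  by (induct t arbitrary: k s) simp_all

lemma subst_subst:
  "i < j + 1 \<Longrightarrow> subst (subst t (lift v i) (Suc j)) (subst u v j) i = subst (subst t u i) v j"
  by (induct t arbitrary: i j u v)
    (simp_all add: diff_Suc lift_lift [symmetric] lift_subst_lt split: nat.split)

inductive par :: "lterm \<Rightarrow> lterm \<Rightarrow> bool" where
  par_Var [simp, intro!]: "par (Var n) (Var n)"
| par_Abs [simp, intro!]: "par s t \<Longrightarrow> par (Abs s) (Abs t)"
| par_App [simp, intro!]: "par s s' \<Longrightarrow> par t t' \<Longrightarrow> par (App s t) (App s' t')"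
| par_beta [simp, intro!]: "par s s' \<Longrightarrow> par t t' \<Longrightarrow> par (App (Abs s) t) (subst s' t' 0)"

inductive_cases par_AbsE: "par (Abs s) t"

lemma par_refl [simp]: "par t t"
  by (induct t) simp_all

lemma beta_imp_par: "beta s t \<Longrightarrow> par s t"
  by (induct rule: beta.induct) auto

lemma rtranclp_beta_AppL: "beta\<^sup>*\<^sup>* s s' \<Longrightarrow> beta\<^sup>*\<^sup>* (App s t) (App s' t)"
  by (induct rule: rtranclp_induct) (auto intro: rtranclp.rtrancl_into_rtrancl beta.appL)

lemma rtranclp_beta_AppR: "beta\<^sup>*\<^sup>* t t' \<Longrightarrow> beta\<^sup>*\<^sup>* (App s t) (App s t')"
  by (induct rule: rtranclp_induct) (auto intro: rtranclp.rtrancl_into_rtrancl beta.appR)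

lemma rtranclp_beta_App:
  "beta\<^sup>*\<^sup>* s s' \<Longrightarrow> beta\<^sup>*\<^sup>* t t' \<Longrightarrow> beta\<^sup>*\<^sup>* (App s t) (App s' t')"
  by (meson rtranclp_beta_AppL rtranclp_beta_AppR rtranclp_trans)

lemma rtranclp_beta_Abs: "beta\<^sup>*\<^sup>* s t \<Longrightarrow> beta\<^sup>*\<^sup>* (Abs s) (Abs t)"
  by (induct rule: rtranclp_induct) (auto intro: rtranclp.rtrancl_into_rtrancl beta.abs)

lemma par_imp_rtranclp_beta: "par s t \<Longrightarrow> beta\<^sup>*\<^sup>* s t"
proof (induct rule: par.induct)
  case (par_beta s s' t t')
  then have "beta\<^sup>*\<^sup>* (App (Abs s) t) (App (Abs s') t')"
    by (simp add: rtranclp_beta_App rtranclp_beta_Abs)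
  then show ?case by (meson beta.beta_redex rtranclp.rtrancl_into_rtrancl)
qed (simp_all add: rtranclp_beta_App rtranclp_beta_Abs)

lemma par_lift [simp]: "par t t' \<Longrightarrow> par (lift t n) (lift t' n)"
  by (induct arbitrary: n rule: par.induct) auto

lemma par_subst: "par t t' \<Longrightarrow> par s s' \<Longrightarrow> par (subst t s n) (subst t' s' n)"
proof (induct arbitrary: s s' n rule: par.induct)
  case (par_beta u u' v v')
  then show ?case by (simp add: subst_subst [symmetric])
qed auto

text \<open>Takahashi's complete development; \<open>par_complete_dev\<close> is the triangle property.\<close>

fun complete_dev :: "lterm \<Rightarrow> lterm" where
  "complete_dev (Var n) = Var n"
| "complete_dev (Abs s) = Abs (complete_dev s)"
| "complete_dev (App (Abs s) t) = subst (complete_dev s) (complete_dev t) 0"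
| "complete_dev (App s t) = App (complete_dev s) (complete_dev t)"

lemma par_complete_dev: "par s t \<Longrightarrow> par t (complete_dev s)"
proof (induct rule: par.induct)
  case (par_App s s' t t')
  show ?case
  proof (cases s)
    case (Abs r)
    with par_App obtain r' where "s' = Abs r'" "par r' (complete_dev r)"
      by (auto elim: par_AbsE)
    with Abs par_App show ?thesis by simp
  qed (use par_App in simp_all)
qed (simp_all add: par_subst)

lemma confluentp_beta: "confluentp beta"
proof -
  have "strong_confluentp par"
    by (rule strong_confluentpI) (blast intro: par_complete_dev)
  then have "confluentp par"
    by (rule strong_confluentp_imp_confluentp)
  moreover have "par\<^sup>*\<^sup>* = beta\<^sup>*\<^sup>*"
    by (rule rtranclp_subset) (auto intro: beta_imp_par par_imp_rtranclp_beta)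
  ultimately show ?thesis
    unfolding confluentp_def rtranclp_conversep by simp
qed

lemma beta_conv_imp_common_reduct:
  "beta_conv x y \<Longrightarrow> \<exists>z. beta\<^sup>*\<^sup>* x z \<and> beta\<^sup>*\<^sup>* y z"
  unfolding beta_conv_def
  using semiconfluentp_equivclp[OF confluentp_imp_semiconfluentp[OF confluentp_beta]]
  by (auto simp: rtranclp_conversep)

section \<open>Typing over arrow structures\<close>

type_synonym 'a arrows = "'a \<Rightarrow> ('a \<times> 'a) option"

definition shift :: "(nat \<Rightarrow> 'a) \<Rightarrow> nat \<Rightarrow> 'a \<Rightarrow> nat \<Rightarrow> 'a" where
  "shift e i a = (\<lambda>j. if j < i then e j else if j = i then a else e (j - 1))"

lemma shift_eq [simp]: "i = j \<Longrightarrow> shift e i a j = a"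
  and shift_lt [simp]: "j < i \<Longrightarrow> shift e i a j = e j"
  and shift_gt [simp]: "i < j \<Longrightarrow> shift e i a j = e (j - 1)"
  by (simp_all add: shift_def)

lemma shift_commute [simp]: "shift (shift e i b) 0 a = shift (shift e 0 a) (Suc i) b"
  by (rule ext) (simp_all add: shift_def split: nat.split, force)

inductive typing :: "'a arrows \<Rightarrow> (nat \<Rightarrow> 'a) \<Rightarrow> lterm \<Rightarrow> 'a \<Rightarrow> bool"
  for A where
  typing_Var: "e i = a \<Longrightarrow> typing A e (Var i) a"
| typing_Abs: "A c = Some (a, b) \<Longrightarrow> typing A (shift e 0 a) M b \<Longrightarrow> typing A e (Abs M) c"
| typing_App: "typing A e M c \<Longrightarrow> A c = Some (a, b) \<Longrightarrow> typing A e N a \<Longrightarrow> typing A e (App M N) b"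

inductive_cases typing_VarE: "typing A e (Var i) c"
  and typing_AbsE: "typing A e (Abs M) c"
  and typing_AppE: "typing A e (App M N) c"

lemma typing_lift: "typing A e t c \<Longrightarrow> typing A (shift e i a) (lift t i) c"
proof (induct arbitrary: i a rule: typing.induct)
  case (typing_App e M c a b N)
  then show ?case by (auto intro: typing.typing_App[where c = c])
qed (auto intro: typing.intros)

lemma typing_subst:
  "typing A e t c \<Longrightarrow> typing A e' u a \<Longrightarrow> e = shift e' i a \<Longrightarrow> typing A e' (subst t u i) c"
proof (induct arbitrary: e' i a u rule: typing.induct)
  case (typing_Var e j c)
  then show ?case by (cases j i rule: linorder_cases) (auto intro: typing.intros)
next
  case (typing_Abs c a' b e M)
  have "typing A (shift e' 0 a') (lift u 0) a"
    using typing_Abs(4) by (rule typing_lift)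
  then have "typing A (shift e' 0 a') (subst M (lift u 0) (Suc i)) b"
    by (rule typing_Abs(3)) (simp add: typing_Abs(5))
  with typing_Abs(1) show ?case by (auto intro: typing.typing_Abs)
next
  case (typing_App e M c a' b N)
  then show ?case by (auto intro: typing.typing_App[where c = c])
qed

lemma typing_beta: "beta t t' \<Longrightarrow> typing A e t c \<Longrightarrow> typing A e t' c"
proof (induct arbitrary: e c rule: beta.induct)
  case (beta_redex s t)
  then show ?case by (auto elim!: typing_AppE typing_AbsE intro: typing_subst)
qed (auto elim!: typing_AppE typing_AbsE intro: typing.intros)

lemma typing_rtranclp_beta: "beta\<^sup>*\<^sup>* t t' \<Longrightarrow> typing A e t c \<Longrightarrow> typing A e t' c"
  by (induct rule: rtranclp_induct) (auto intro: typing_beta)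

definition prod_arrows :: "'a arrows \<Rightarrow> 'b arrows \<Rightarrow> ('a \<times> 'b) arrows" where
  "prod_arrows A B p = (case (A (fst p), B (snd p)) of
     (Some (a, b), Some (a', b')) \<Rightarrow> Some ((a, a'), (b, b')) | _ \<Rightarrow> None)"

lemma prod_arrows_Some:
  "A c = Some (a, b) \<Longrightarrow> B c' = Some (a', b') \<Longrightarrow> prod_arrows A B (c, c') = Some ((a, a'), (b, b'))"
  by (simp add: prod_arrows_def)

lemma shift_pair: "shift (\<lambda>i. (e i, e' i)) 0 (a, a') = (\<lambda>i. (shift e 0 a i, shift e' 0 a' i))"
  by (rule ext) (simp add: shift_def)

lemma typing_prod:
  "typing A e M c \<Longrightarrow> typing B e' M c' \<Longrightarrow> typing (prod_arrows A B) (\<lambda>i. (e i, e' i)) M (c, c')"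
proof (induct arbitrary: e' c' rule: typing.induct)
  case (typing_Var e i c)
  then show ?case by (auto elim!: typing_VarE intro: typing.intros)
next
  case (typing_Abs c a b e M)
  then show ?case
    by (auto elim!: typing_AbsE intro!: typing.typing_Abs prod_arrows_Some simp: shift_pair)
next
  case (typing_App e M c a b N)
  then show ?case
    by (auto elim!: typing_AppE intro!: typing.typing_App[where c = "(c, _)"] prod_arrows_Some)
qed

definition arrow_model :: "'a arrows \<Rightarrow> ('a \<Rightarrow> bool) \<Rightarrow> bool" where
  "arrow_model A v \<longleftrightarrow> (\<forall>c a b. A c = Some (a, b) \<longrightarrow> (v c \<longleftrightarrow> (v a \<longrightarrow> v b)))"

lemma typing_sound: "typing A e M c \<Longrightarrow> arrow_model A v \<Longrightarrow> \<forall>i. v (e i) \<Longrightarrow> v c"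
proof (induct rule: typing.induct)
  case (typing_Abs c a b e M)
  then have "v a \<Longrightarrow> v b" by (auto simp: shift_def)
  with typing_Abs show ?case unfolding arrow_model_def by blast
qed (auto simp: arrow_model_def)

section \<open>The Scott sequence in a recursive type\<close>

datatype ty = Base | Fun ty ty | Rec

text \<open>\<open>Rec\<close> is the recursive type \<open>\<mu>t. t \<rightarrow> s\<close>; it types the self-application in \<open>Y\<^sub>0\<close>.\<close>

fun rec_arrows :: "ty \<Rightarrow> ty arrows" where
  "rec_arrows s (Fun a b) = Some (a, b)"
| "rec_arrows s Rec = Some (Rec, s)"
| "rec_arrows s Base = None"

lemma typing_rec_Abs:
  "typing (rec_arrows s) (shift e 0 a) M b \<Longrightarrow> typing (rec_arrows s) e (Abs M) (Fun a b)"
  by (rule typing_Abs) simp_all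

lemma typing_rec_App:
  "typing (rec_arrows s) e M (Fun a b) \<Longrightarrow> typing (rec_arrows s) e N a \<Longrightarrow>
   typing (rec_arrows s) e (App M N) b"
  by (rule typing_App[where c = "Fun a b"]) simp_all

lemma typing_combI: "typing (rec_arrows s) e combI (Fun a a)"
  unfolding combI_def by (intro typing_rec_Abs typing_Var) simp

lemma typing_combS:
  "typing (rec_arrows s) e combS (Fun (Fun a (Fun b c)) (Fun (Fun a b) (Fun a c)))"
  unfolding combS_def by (intro typing_rec_Abs typing_rec_App typing_Var) simp_all

lemma typing_combB: "typing (rec_arrows s) e combB (Fun (Fun b c) (Fun (Fun a b) (Fun a c)))"
  unfolding combB_def by (intro typing_rec_Abs typing_rec_App typing_Var) simp_all

lemma typing_combY0: "typing (rec_arrows s) e combY0 (Fun (Fun s s) s)"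
proof -
  have self_app: "typing (rec_arrows s) e' (App (Var 0) (Var 0)) s" if "e' 0 = Rec" for e'
    by (intro typing_App[where c = Rec] typing_Var) (simp_all add: that)
  have \<omega>: "typing (rec_arrows s) (shift e 0 (Fun s s))
              (Abs (App (Var 1) (App (Var 0) (Var 0)))) Rec"
    by (rule typing_Abs[where a = Rec and b = s])
      (auto intro!: typing_rec_App[OF typing_Var self_app])
  show ?thesis
    unfolding combY0_def
    by (intro typing_rec_Abs typing_App[OF \<omega> _ \<omega>]) simp
qed

fun scott_types :: "nat \<Rightarrow> ty \<times> ty" where
  "scott_types 0 = (Fun Base Base, Base)"
| "scott_types (Suc k) = (case scott_types k of (x, y) \<Rightarrow> (Fun x (Fun y y), Fun x y))"

definition tyX :: "nat \<Rightarrow> ty" where "tyX k = fst (scott_types k)"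
definition tyY :: "nat \<Rightarrow> ty" where "tyY k = snd (scott_types k)"

lemma tyX_0 [simp]: "tyX 0 = Fun Base Base"
  and tyY_0 [simp]: "tyY 0 = Base"
  and tyX_Suc [simp]: "tyX (Suc k) = Fun (tyX k) (Fun (tyY k) (tyY k))"
  and tyY_Suc [simp]: "tyY (Suc k) = Fun (tyX k) (tyY k)"
  by (simp_all add: tyX_def tyY_def split: prod.split)

lemma typing_BY0_Spow:
  "typing (rec_arrows (tyY (k + j))) e (app_pow (App combB combY0) combS j) (tyY (Suc (Suc k)))"
proof (induct j arbitrary: k)
  case 0
  show ?case by (simp add: typing_rec_App[OF typing_combB typing_combY0])
next
  case (Suc j)
  from Suc[of "Suc k"] show ?case
    by (auto intro: typing_rec_App typing_combS)
qed

lemma typing_scott_term: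
  "typing (rec_arrows (tyY n)) e (App (app_pow (App combB combY0) combS n) combI) (tyY 1)"
  using typing_BY0_Spow[of 0 n e] by (auto intro: typing_rec_App typing_combI)

section \<open>A two-valued model of the product structure\<close>

fun rec_count :: "ty \<Rightarrow> nat" where
  "rec_count Base = 0"
| "rec_count (Fun a b) = rec_count a + rec_count b"
| "rec_count Rec = 1"

fun erase_rec :: "ty \<Rightarrow> ty" where
  "erase_rec Base = Base"
| "erase_rec (Fun a b) = Fun (erase_rec a) (erase_rec b)"
| "erase_rec Rec = Base"

lemma rec_count_erase_rec [simp]: "rec_count (erase_rec s) = 0"
  by (induct s) auto

text \<open>
  Only arrows of \<open>prod_arrows (rec_arrows s) (rec_arrows s')\<close> constrain the valuation, so
  pairs involving \<open>Base\<close> are free. \<open>erase_rec\<close> is there for termination only: it is the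
  identity on the \<open>s\<close>, \<open>s'\<close> used.
\<close>

function pair_val :: "ty \<Rightarrow> ty \<Rightarrow> ty \<Rightarrow> ty \<Rightarrow> bool" where
  "pair_val s s' (Fun a b) (Fun a' b') = (pair_val s s' a a' \<longrightarrow> pair_val s s' b b')"
| "pair_val s s' Rec (Fun a b) = (pair_val s s' Rec a \<longrightarrow> pair_val s s' (erase_rec s) b)"
| "pair_val s s' (Fun a b) Rec = (pair_val s s' a Rec \<longrightarrow> pair_val s s' b (erase_rec s'))"
| "pair_val s s' Base Base = False"
| "pair_val s s' Rec Rec = True"
| "pair_val s s' Base (Fun a b) = True"
| "pair_val s s' Base Rec = True"
| "pair_val s s' (Fun a b) Base = True"
| "pair_val s s' Rec Base = True"
  by pat_completeness auto
termination
  by (relation "measures [\<lambda>(s, s', x, y). rec_count x + rec_count y, \<lambda>(s, s', x, y). size x + size y]")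
    auto

lemma arrow_model_pair_val:
  assumes "erase_rec s = s" "erase_rec s' = s'" "pair_val s s' s s'"
  shows "arrow_model (prod_arrows (rec_arrows s) (rec_arrows s')) (case_prod (pair_val s s'))"
  unfolding arrow_model_def
proof (intro allI impI)
  fix c a b
  assume "prod_arrows (rec_arrows s) (rec_arrows s') c = Some (a, b)"
  with assms show "case_prod (pair_val s s') c \<longleftrightarrow>
                   (case_prod (pair_val s s') a \<longrightarrow> case_prod (pair_val s s') b)"
    by (cases c; cases "fst c"; cases "snd c") (auto simp: prod_arrows_def)
qed

lemma erase_rec_tyX_tyY: "erase_rec (tyX k) = tyX k \<and> erase_rec (tyY k) = tyY k"
  by (induct k) auto

lemma pair_val_tyX: "pair_val s s' (tyX k) (tyX k')"
  by (cases k; cases k') auto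

lemma pair_val_tyY: "k \<noteq> k' \<Longrightarrow> pair_val s s' (tyY k) (tyY k')"
proof (induct k arbitrary: k')
  case 0
  then show ?case by (cases k') auto
next
  case (Suc k)
  then show ?case by (cases k') (auto simp: pair_val_tyX)
qed

theorem corollary6p15:
  fixes n m :: nat
  assumes "n \<noteq> m"
  shows "\<not> beta_conv (App (app_pow (App combB combY0) combS n) combI)
                      (App (app_pow (App combB combY0) combS m) combI)"
proof
  assume "beta_conv (App (app_pow (App combB combY0) combS n) combI)
                    (App (app_pow (App combB combY0) combS m) combI)"
  then obtain R where
    "beta\<^sup>*\<^sup>* (App (app_pow (App combB combY0) combS n) combI) R"
    "beta\<^sup>*\<^sup>* (App (app_pow (App combB combY0) combS m) combI) R"
    by (blast dest: beta_conv_imp_common_reduct)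
  then have "typing (rec_arrows (tyY n)) (\<lambda>_. Rec) R (tyY 1)"
    and "typing (rec_arrows (tyY m)) (\<lambda>_. Rec) R (tyY 1)"
    by (blast intro: typing_rtranclp_beta typing_scott_term)+
  then have "typing (prod_arrows (rec_arrows (tyY n)) (rec_arrows (tyY m)))
                (\<lambda>_. (Rec, Rec)) R (tyY 1, tyY 1)"
    by (rule typing_prod)
  moreover have "arrow_model (prod_arrows (rec_arrows (tyY n)) (rec_arrows (tyY m)))
                   (case_prod (pair_val (tyY n) (tyY m)))"
    using arrow_model_pair_val erase_rec_tyX_tyY pair_val_tyY[OF assms] by blast
  ultimately have "pair_val (tyY n) (tyY m) (tyY 1) (tyY 1)"
    by (auto dest: typing_sound)
  then show False by simp
qed

end
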